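(* Let $X\in\mathbb{R}^g$ be a random block, let $\{L_B\}_{B\in\overline{\mathcal C}}$ be nonnegative block losses, and let $S,F$ be a measurable partition of the block space with $p=\mathbb{P}(X\in S)$. Let $R_S^\star=\inf_{B}R_S(B)$ and $R_F^\star=\inf_B R_F(B)$. If grids $B_S,B_F\in\overline{\mathcal C}$ and constants $\alpha_S,\alpha_F$ satisfy $R_S(B_S)\le\alpha_S R_S^\star$ and $R_F(B_F)\le\alpha_F R_F^\star$, then $$R_{\mathrm{PO2}}(B_S,B_F)\le\max\{\alpha_S,\alpha_F\}\,R^\star.$$
   Context: Grid space: $\overline{\mathcal C}:=\{B=(b_0,\dots,b_7):0=b_0\le\cdots\le b_7=1\}$. For a block $X=(X_1,\dots,X_g)$ with $M=\max_i|X_i|$, the absmax block loss is $L_B(X)=M^2\frac1g\sum_i\min_j(|X_i|/M-b_j)^2$ (zero if $M=0$). Conditional risks: $R_S(B):=\mathbb{E}[L_B(X)\mid X\in S]$, $R_F(B):=\mathbb{E}[L_B(X)\mid X\in F]$. Two-grid risk: $R_{\mathrm{PO2}}(B_1,B_2):=\mathbb{E}[\min\{L_{B_1}(X),L_{B_2}(X)\}]$. Best single-grid risk: $R^\star:=\inf_{B\in\overline{\mathcal C}}\mathbb{E}L_B(X)=\inf_B\bigl(pR_S(B)+(1-p)R_F(B)\bigr)$. *)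

theory Defs
  imports "HOL-Probability.Probability"
begin

text \<open>Grid space: grids B = (b_0,...,b_7) with 0 = b_0 <= ... <= b_7 = 1,
  represented as functions nat => real (only the values at 0..7 matter).\<close>
definition Cbar :: "(nat \<Rightarrow> real) set" where
  "Cbar = {b. b 0 = 0 \<and> b 7 = 1 \<and> (\<forall>i<7. b i \<le> b (Suc i))}"

definition cond_risk ::
  "'a measure \<Rightarrow> ('a \<Rightarrow> 'b) \<Rightarrow> ('c \<Rightarrow> 'b \<Rightarrow> real) \<Rightarrow> 'b set \<Rightarrow> 'c \<Rightarrow> real" where
  "cond_risk M X L A B =
     (\<integral>\<omega>. indicator A (X \<omega>) * L B (X \<omega>) \<partial>M) / measure M {\<omega>\<in>space M. X \<omega> \<in> A}"

definition risk_PO2 ::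
  "'a measure \<Rightarrow> ('a \<Rightarrow> 'b) \<Rightarrow> ('c \<Rightarrow> 'b \<Rightarrow> real) \<Rightarrow> 'c \<Rightarrow> 'c \<Rightarrow> real" where
  "risk_PO2 M X L B1 B2 = (\<integral>\<omega>. min (L B1 (X \<omega>)) (L B2 (X \<omega>)) \<partial>M)"

definition best_risk ::
  "'a measure \<Rightarrow> ('a \<Rightarrow> 'b) \<Rightarrow> ('c \<Rightarrow> 'b \<Rightarrow> real) \<Rightarrow> 'c set \<Rightarrow> real" where
  "best_risk M X L G = (INF B\<in>G. \<integral>\<omega>. L B (X \<omega>) \<partial>M)"

end

theory Submission
  imports Defs
begin

text \<open>Comparing with an arbitrary single grid B: on S the two-grid risk is at most the loss of B_S,
  on F at most that of B_F, and by near-optimality these conditional risks are within the factor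
  max \<alpha>_S \<alpha>_F of the conditional risks of B. The law of total expectation reassembles the
  latter into the risk of B, and taking the infimum over B gives the bound.\<close>

lemma (in finite_measure) integral_indicator_mult_eq_cond_risk:
  assumes X: "X \<in> measurable M N" and A: "A \<in> sets N"
  shows "(\<integral>\<omega>. indicator A (X \<omega>) * L B (X \<omega>) \<partial>M)
       = measure M {\<omega>\<in>space M. X \<omega> \<in> A} * cond_risk M X L A B"
proof (cases "measure M {\<omega>\<in>space M. X \<omega> \<in> A} = 0")
  case True
  \<comment> \<open>Here cond_risk is 0 through division by zero, so the integral must vanish too.\<close>
  have "{\<omega>\<in>space M. X \<omega> \<in> A} \<in> sets M"
    using measurable_sets[OF X A] by (simp add: vimage_def Int_def conj_commute)
  with True have "{\<omega>\<in>space M. X \<omega> \<in> A} \<in> null_sets M"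
    by (auto simp: emeasure_eq_measure)
  then have "AE \<omega> in M. \<omega> \<notin> {\<omega>\<in>space M. X \<omega> \<in> A}" by (rule AE_not_in)
  then have "AE \<omega> in M. indicator A (X \<omega>) * L B (X \<omega>) = 0"
    by (rule AE_mp) (auto simp: indicator_def intro!: AE_space[THEN AE_mp])
  then have "(\<integral>\<omega>. indicator A (X \<omega>) * L B (X \<omega>) \<partial>M) = 0" by (rule integral_eq_zero_AE)
  with True show ?thesis by simp
qed (simp add: cond_risk_def)

lemma cond_risk_nonneg:
  assumes "\<And>x. 0 \<le> L B x"
  shows "0 \<le> cond_risk M X L A B"
  unfolding cond_risk_def using assms
  by (intro divide_nonneg_nonneg integral_nonneg_AE) (auto simp: indicator_def)

lemma integrable_indicator_comp_mult:
  fixes f :: "'b \<Rightarrow> real"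
  assumes X: "X \<in> measurable M N" and A: "A \<in> sets N" and f: "f \<in> borel_measurable N"
    and int: "integrable M (\<lambda>\<omega>. f (X \<omega>))"
  shows "integrable M (\<lambda>\<omega>. indicator A (X \<omega>) * f (X \<omega>))"
proof (rule Bochner_Integration.integrable_bound[OF int])
  show "(\<lambda>\<omega>. indicator A (X \<omega>) * f (X \<omega>)) \<in> borel_measurable M"
    using measurable_compose[OF X borel_measurable_indicator[OF A]] measurable_compose[OF X f]
    by (intro borel_measurable_times) (simp_all add: o_def)
qed (auto simp: indicator_def)

lemma (in finite_measure) integral_eq_cond_risk_partition:
  assumes X: "X \<in> measurable M N" and S: "S \<in> sets N" and F: "F \<in> sets N"
    and partition: "S \<inter> F = {}" "S \<union> F = UNIV"
    and L: "L B \<in> borel_measurable N" and int: "integrable M (\<lambda>\<omega>. L B (X \<omega>))"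
  shows "(\<integral>\<omega>. L B (X \<omega>) \<partial>M)
       = measure M {\<omega>\<in>space M. X \<omega> \<in> S} * cond_risk M X L S B
       + measure M {\<omega>\<in>space M. X \<omega> \<in> F} * cond_risk M X L F B"
proof -
  have "(\<integral>\<omega>. L B (X \<omega>) \<partial>M)
      = (\<integral>\<omega>. indicator S (X \<omega>) * L B (X \<omega>) + indicator F (X \<omega>) * L B (X \<omega>) \<partial>M)"
    using partition by (intro Bochner_Integration.integral_cong) (auto simp: indicator_def)
  also have "\<dots> = (\<integral>\<omega>. indicator S (X \<omega>) * L B (X \<omega>) \<partial>M)
                + (\<integral>\<omega>. indicator F (X \<omega>) * L B (X \<omega>) \<partial>M)"
    using integrable_indicator_comp_mult[OF X S L int] integrable_indicator_comp_mult[OF X F L int]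
    by (rule Bochner_Integration.integral_add)
  finally show ?thesis
    by (simp add: integral_indicator_mult_eq_cond_risk[OF X S]
        integral_indicator_mult_eq_cond_risk[OF X F])
qed

lemma (in finite_measure) risk_PO2_le_cond_risks:
  assumes X: "X \<in> measurable M N" and S: "S \<in> sets N" and F: "F \<in> sets N"
    and partition: "S \<inter> F = {}" "S \<union> F = UNIV"
    and L1: "L B1 \<in> borel_measurable N" and int1: "integrable M (\<lambda>\<omega>. L B1 (X \<omega>))"
    and L2: "L B2 \<in> borel_measurable N" and int2: "integrable M (\<lambda>\<omega>. L B2 (X \<omega>))"
  shows "risk_PO2 M X L B1 B2
       \<le> measure M {\<omega>\<in>space M. X \<omega> \<in> S} * cond_risk M X L S B1
       + measure M {\<omega>\<in>space M. X \<omega> \<in> F} * cond_risk M X L F B2"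
proof -
  have intS: "integrable M (\<lambda>\<omega>. indicator S (X \<omega>) * L B1 (X \<omega>))"
    by (rule integrable_indicator_comp_mult[OF X S L1 int1])
  have intF: "integrable M (\<lambda>\<omega>. indicator F (X \<omega>) * L B2 (X \<omega>))"
    by (rule integrable_indicator_comp_mult[OF X F L2 int2])
  have "risk_PO2 M X L B1 B2
      \<le> (\<integral>\<omega>. indicator S (X \<omega>) * L B1 (X \<omega>) + indicator F (X \<omega>) * L B2 (X \<omega>) \<partial>M)"
    unfolding risk_PO2_def
    using int1 int2 intS intF partition
    by (intro integral_mono) (auto simp: indicator_def)
  also have "\<dots> = (\<integral>\<omega>. indicator S (X \<omega>) * L B1 (X \<omega>) \<partial>M)
                + (\<integral>\<omega>. indicator F (X \<omega>) * L B2 (X \<omega>) \<partial>M)"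
    using intS intF by (rule Bochner_Integration.integral_add)
  finally show ?thesis
    by (simp add: integral_indicator_mult_eq_cond_risk[OF X S]
        integral_indicator_mult_eq_cond_risk[OF X F])
qed

lemma le_scaled_INF_imp_le_scaled:
  fixes c :: "'b \<Rightarrow> real"
  assumes c0: "c0 \<le> \<alpha> * (INF x\<in>G. c x)" and nonneg: "\<And>x. x \<in> G \<Longrightarrow> 0 \<le> c x"
    and "\<alpha> \<le> m" "0 \<le> m" and x: "x \<in> G"
  shows "c0 \<le> m * c x"
proof -
  have "0 \<le> (INF x\<in>G. c x)"
    using x nonneg by (auto intro!: cINF_greatest)
  then have "\<alpha> * (INF x\<in>G. c x) \<le> m * (INF x\<in>G. c x)"
    using \<open>\<alpha> \<le> m\<close> by (intro mult_right_mono)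
  also have "\<dots> \<le> m * c x"
    using nonneg x \<open>0 \<le> m\<close> by (intro mult_left_mono cINF_lower bdd_belowI[where m = 0]) auto
  finally show ?thesis using c0 by simp
qed

lemma le_mult_INF:
  fixes f :: "'b \<Rightarrow> real"
  assumes "G \<noteq> {}" "0 \<le> m" and le: "\<And>x. x \<in> G \<Longrightarrow> r \<le> m * f x"
  shows "r \<le> m * (INF x\<in>G. f x)"
proof (cases "m = 0")
  case True
  with assms show ?thesis by auto
next
  case False
  with \<open>0 \<le> m\<close> have "0 < m" by simp
  with le have "r / m \<le> (INF x\<in>G. f x)"
    using \<open>G \<noteq> {}\<close> by (intro cINF_greatest) (auto simp: divide_le_eq mult.commute)
  with \<open>0 < m\<close> show ?thesis by (simp add: divide_le_eq mult.commute)
qed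

theorem corollary1:
  fixes M :: "'a measure"
    and X :: "'a \<Rightarrow> real ^ 'g"
    and L :: "(nat \<Rightarrow> real) \<Rightarrow> real ^ 'g \<Rightarrow> real"
    and S F :: "(real ^ 'g) set"
    and B_S B_F :: "nat \<Rightarrow> real"
    and \<alpha>_S \<alpha>_F :: real
  assumes "prob_space M"
    and "X \<in> borel_measurable M"
    and "\<And>B. B \<in> Cbar \<Longrightarrow> L B \<in> borel_measurable borel"
    and "\<And>B x. B \<in> Cbar \<Longrightarrow> 0 \<le> L B x"
    and "\<And>B. B \<in> Cbar \<Longrightarrow> integrable M (\<lambda>\<omega>. L B (X \<omega>))"
    and "S \<in> sets borel" and "F \<in> sets borel"
    and "S \<inter> F = {}" and "S \<union> F = UNIV"
    and "B_S \<in> Cbar" and "B_F \<in> Cbar"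
    and "0 \<le> max \<alpha>_S \<alpha>_F"
    and "cond_risk M X L S B_S \<le> \<alpha>_S * (INF B\<in>Cbar. cond_risk M X L S B)"
    and "cond_risk M X L F B_F \<le> \<alpha>_F * (INF B\<in>Cbar. cond_risk M X L F B)"
  shows "risk_PO2 M X L B_S B_F \<le> max \<alpha>_S \<alpha>_F * best_risk M X L Cbar"
proof -
  interpret prob_space M by (rule assms(1))
  define m where "m = max \<alpha>_S \<alpha>_F"
  define P where "P A = measure M {\<omega>\<in>space M. X \<omega> \<in> A}" for A
  have "0 \<le> m" "\<alpha>_S \<le> m" "\<alpha>_F \<le> m"
    using assms(12) by (simp_all add: m_def)
  have risk_nonneg: "\<And>A B. B \<in> Cbar \<Longrightarrow> 0 \<le> cond_risk M X L A B"
    using assms(4) by (blast intro: cond_risk_nonneg)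
  have "risk_PO2 M X L B_S B_F \<le> m * (\<integral>\<omega>. L B (X \<omega>) \<partial>M)" if B: "B \<in> Cbar" for B
  proof -
    have risk_S: "cond_risk M X L S B_S \<le> m * cond_risk M X L S B"
      using risk_nonneg \<open>\<alpha>_S \<le> m\<close> \<open>0 \<le> m\<close> B
      by (rule le_scaled_INF_imp_le_scaled[OF assms(13)])
    have risk_F: "cond_risk M X L F B_F \<le> m * cond_risk M X L F B"
      using risk_nonneg \<open>\<alpha>_F \<le> m\<close> \<open>0 \<le> m\<close> B
      by (rule le_scaled_INF_imp_le_scaled[OF assms(14)])
    have "risk_PO2 M X L B_S B_F \<le> P S * cond_risk M X L S B_S + P F * cond_risk M X L F B_F"
      using risk_PO2_le_cond_risks[where L = L, OF assms(2,6-9) assms(3,5)[OF assms(10)]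
          assms(3,5)[OF assms(11)]]
      by (simp add: P_def)
    also have "\<dots> \<le> m * (P S * cond_risk M X L S B + P F * cond_risk M X L F B)"
      using mult_left_mono[OF risk_S, of "P S"] mult_left_mono[OF risk_F, of "P F"]
      by (simp add: P_def algebra_simps)
    also have "\<dots> = m * (\<integral>\<omega>. L B (X \<omega>) \<partial>M)"
      using integral_eq_cond_risk_partition[where L = L and B = B, OF assms(2,6-9) assms(3,5)[OF B]]
      by (simp add: P_def)
    finally show ?thesis .
  qed
  then show ?thesis
    unfolding best_risk_def m_def[symmetric] using assms(10) \<open>0 \<le> m\<close> by (intro le_mult_INF) auto
qed

end
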